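(* Let $(J,F,Y)$ be a pullback triple and let $Y_0\subset Y$ be a restriction of $Y$. Then $(J,F,Y_0)$ is a pullback triple if and only if $\mathcal D(Y_0)$ is a core of $Y$. In this case $(J,F,Y)$ and $(J,F,Y_0)$ are equivalent.
   Context: For Hilbert spaces $\mathcal H,\mathcal X,\mathcal E$, a pullback triple $(J,F,Y)$ consists of $J:\mathcal X\to\mathcal H$, $F:\mathcal X\to\mathcal E$ bounded with dense range, $Y:\mathcal H\to\mathcal X$ a completion operator (densely defined injective linear map with dense range), with $\|u\|_{\mathcal X}^2=\|Ju\|^2+\|Fu\|_{\mathcal E}^2$ for all $u\in\mathcal X$ and $JYf=f$ for $f\in\mathcal D(Y)$. A subspace $\mathcal D_0\subset\mathcal D(Y)$ is a core of $Y$ if for every $f\in\mathcal D(Y)$ there are $f_j\in\mathcal D_0$ with $f_j\to f$ and $Yf_j\to Yf$. Two pullback triples $(J_j,F_j,Y_j)$ with spaces $\mathcal H_j,\mathcal X_j,\mathcal E_j$ are equivalent if there are unitaries $W_{\mathcal H},W_{\mathcal X},W_{\mathcal E}$ with $W_{\mathcal H}J_1=J_2W_{\mathcal X}$ and $W_{\mathcal E}F_1=F_2W_{\mathcal X}$. *)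

theory Defs
  imports "HOL-Analysis.Analysis"
begin

text \<open>A (possibly unbounded) operator from 'h to 'x is modelled as a pair of a domain
  D :: 'h set and a function Y :: 'h => 'x (values outside D are irrelevant).\<close>

definition dense_range :: "('a::topological_space \<Rightarrow> 'b::topological_space) \<Rightarrow> bool" where
  "dense_range T \<longleftrightarrow> closure (range T) = UNIV"

definition linear_operator_on :: "'a::real_vector set \<Rightarrow> ('a \<Rightarrow> 'b::real_vector) \<Rightarrow> bool" where
  "linear_operator_on D Y \<longleftrightarrow> subspace D \<and>
     (\<forall>f\<in>D. \<forall>g\<in>D. Y (f + g) = Y f + Y g) \<and>
     (\<forall>c. \<forall>f\<in>D. Y (c *\<^sub>R f) = c *\<^sub>R Y f)"

definition completion_operator ::
  "'h::real_normed_vector set \<Rightarrow> ('h \<Rightarrow> 'x::real_normed_vector) \<Rightarrow> bool" where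
  "completion_operator D Y \<longleftrightarrow> linear_operator_on D Y \<and> closure D = UNIV \<and>
     inj_on Y D \<and> closure (Y ` D) = UNIV"

definition pullback_triple ::
  "('x::{real_inner,complete_space} \<Rightarrow> 'h::{real_inner,complete_space}) \<Rightarrow>
   ('x \<Rightarrow> 'e::{real_inner,complete_space}) \<Rightarrow> 'h set \<Rightarrow> ('h \<Rightarrow> 'x) \<Rightarrow> bool" where
  "pullback_triple J F D Y \<longleftrightarrow>
     bounded_linear J \<and> dense_range J \<and>
     bounded_linear F \<and> dense_range F \<and>
     completion_operator D Y \<and>
     (\<forall>u. (norm u)\<^sup>2 = (norm (J u))\<^sup>2 + (norm (F u))\<^sup>2) \<and>
     (\<forall>f\<in>D. J (Y f) = f)"

definition is_restriction :: "'h::real_vector set \<Rightarrow> ('h \<Rightarrow> 'x) \<Rightarrow> 'h set \<Rightarrow> ('h \<Rightarrow> 'x) \<Rightarrow> bool" where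
  "is_restriction D0 Y0 D Y \<longleftrightarrow> subspace D0 \<and> D0 \<subseteq> D \<and> (\<forall>f\<in>D0. Y0 f = Y f)"

definition is_core :: "'h::topological_space set \<Rightarrow> 'h set \<Rightarrow> ('h \<Rightarrow> 'x::topological_space) \<Rightarrow> bool" where
  "is_core D0 D Y \<longleftrightarrow> D0 \<subseteq> D \<and>
     (\<forall>f\<in>D. \<exists>s::nat \<Rightarrow> 'h. (\<forall>j. s j \<in> D0) \<and> s \<longlonglongrightarrow> f \<and> (\<lambda>j. Y (s j)) \<longlonglongrightarrow> Y f)"

definition unitary_op :: "('a::real_normed_vector \<Rightarrow> 'b::real_normed_vector) \<Rightarrow> bool" where
  "unitary_op W \<longleftrightarrow> linear W \<and> surj W \<and> (\<forall>x. norm (W x) = norm x)"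

text \<open>Equivalence of pullback triples (the definition does not involve the completion operators).\<close>
definition pullback_equivalent ::
  "('x1::real_normed_vector \<Rightarrow> 'h1::real_normed_vector) \<Rightarrow> ('x1 \<Rightarrow> 'e1::real_normed_vector) \<Rightarrow> 'h1 set \<Rightarrow> ('h1 \<Rightarrow> 'x1) \<Rightarrow>
   ('x2::real_normed_vector \<Rightarrow> 'h2::real_normed_vector) \<Rightarrow> ('x2 \<Rightarrow> 'e2::real_normed_vector) \<Rightarrow> 'h2 set \<Rightarrow> ('h2 \<Rightarrow> 'x2) \<Rightarrow> bool" where
  "pullback_equivalent J1 F1 D1 Y1 J2 F2 D2 Y2 \<longleftrightarrow>
     (\<exists>(WH::'h1 \<Rightarrow> 'h2) (WX::'x1 \<Rightarrow> 'x2) (WE::'e1 \<Rightarrow> 'e2).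
        unitary_op WH \<and> unitary_op WX \<and> unitary_op WE \<and>
        WH \<circ> J1 = J2 \<circ> WX \<and> WE \<circ> F1 = F2 \<circ> WX)"

end

theory Submission
  imports Defs
begin

text \<open>A restriction Y0 of Y inherits linearity, injectivity and the left inverse J, and
  D(Y0) = J(Y(D(Y0))) is automatically dense once Y(D(Y0)) is, since J is continuous with
  dense range. So (J, F, Y0) is a pullback triple iff Y(D(Y0)) is dense in X. Because J is a
  bounded left inverse of Y, convergence of Y f_j already forces convergence of f_j, so this
  density is also exactly the core property. Equivalence of the two triples is witnessed by
  identities, as it does not involve the completion operators.\<close>

lemma closure_image_eq_UNIV_if_dense_range:
  fixes J :: "'a::topological_space \<Rightarrow> 'b::topological_space"
  assumes "continuous_on UNIV J" and "dense_range J" and "closure S = UNIV"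
  shows "closure (J ` S) = UNIV"
proof -
  have "J ` closure S \<subseteq> closure (J ` S)"
    using assms(1) by (intro image_closure_subset closure_subset) (auto intro: continuous_on_subset)
  then have "closure (range J) \<subseteq> closure (J ` S)"
    using assms(3) by (simp add: closure_minimal)
  then show ?thesis
    using assms(2) by (auto simp: dense_range_def)
qed

lemma image_subset_closure_if_core:
  assumes "is_core D0 D Y"
  shows "Y ` D \<subseteq> closure (Y ` D0)"
proof
  fix y assume "y \<in> Y ` D"
  then obtain f where "f \<in> D" and y: "y = Y f" by blast
  then obtain s where "\<forall>j. s j \<in> D0" and "(\<lambda>j. Y (s j)) \<longlonglongrightarrow> Y f"
    using assms unfolding is_core_def by blast
  then show "y \<in> closure (Y ` D0)"
    unfolding y
    by (intro Lim_in_closed_set[of _ "\<lambda>j. Y (s j)"])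
       (auto intro!: always_eventually closure_subset[THEN subsetD])
qed

lemma is_core_if_image_subset_closure:
  fixes J :: "'x::metric_space \<Rightarrow> 'h::topological_space" and Y :: "'h \<Rightarrow> 'x"
  assumes "continuous_on UNIV J" and "D0 \<subseteq> D" and left_inverse: "\<forall>f\<in>D. J (Y f) = f"
    and "Y ` D \<subseteq> closure (Y ` D0)"
  shows "is_core D0 D Y"
  unfolding is_core_def
proof (intro conjI ballI)
  show "D0 \<subseteq> D" by fact
  fix f assume "f \<in> D"
  then have "Y f \<in> closure (Y ` D0)"
    using assms(4) by blast
  then obtain x where "\<forall>n. x n \<in> Y ` D0" and x_lim: "x \<longlonglongrightarrow> Y f"
    unfolding closure_sequential by blast
  then have "\<forall>n. \<exists>t. t \<in> D0 \<and> x n = Y t"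
    by blast
  then obtain s where s: "\<And>n. s n \<in> D0" and x_eq: "\<And>n. x n = Y (s n)"
    by metis
  have "isCont J (Y f)"
    using assms(1) continuous_on_eq_continuous_at by blast
  then have "(\<lambda>n. J (x n)) \<longlonglongrightarrow> J (Y f)"
    using x_lim by (rule isCont_tendsto_compose)
  moreover have "J (x n) = s n" for n
    using s x_eq left_inverse \<open>D0 \<subseteq> D\<close> by auto
  ultimately have "s \<longlonglongrightarrow> f"
    using left_inverse \<open>f \<in> D\<close> by simp
  moreover have "(\<lambda>n. Y (s n)) \<longlonglongrightarrow> Y f"
    using x_lim by (simp add: x_eq[symmetric])
  ultimately show "\<exists>s. (\<forall>j. s j \<in> D0) \<and> s \<longlonglongrightarrow> f \<and> (\<lambda>j. Y (s j)) \<longlonglongrightarrow> Y f"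
    using s by blast
qed

lemma is_core_iff_dense_image:
  fixes J :: "'x::metric_space \<Rightarrow> 'h::topological_space" and Y :: "'h \<Rightarrow> 'x"
  assumes "continuous_on UNIV J" and "D0 \<subseteq> D" and "\<forall>f\<in>D. J (Y f) = f"
    and "closure (Y ` D) = UNIV"
  shows "is_core D0 D Y \<longleftrightarrow> closure (Y ` D0) = UNIV"
proof
  assume "is_core D0 D Y"
  then have "closure (Y ` D) \<subseteq> closure (Y ` D0)"
    by (simp add: closure_minimal image_subset_closure_if_core)
  then show "closure (Y ` D0) = UNIV"
    using assms(4) by auto
next
  assume "closure (Y ` D0) = UNIV"
  then show "is_core D0 D Y"
    using assms(1-3) by (intro is_core_if_image_subset_closure) auto
qed

lemma linear_operator_on_restriction:
  assumes "linear_operator_on D Y" and "is_restriction D0 Y0 D Y"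
  shows "linear_operator_on D0 Y0"
proof -
  have "subspace D0" and "D0 \<subseteq> D" and Y0_eq: "\<forall>f\<in>D0. Y0 f = Y f"
    using assms(2) by (auto simp: is_restriction_def)
  then show ?thesis
    using assms(1) subspace_add[OF \<open>subspace D0\<close>] subspace_scale[OF \<open>subspace D0\<close>]
    unfolding linear_operator_on_def by (simp add: subset_iff)
qed

lemma inj_on_restriction:
  assumes "inj_on Y D" and "is_restriction D0 Y0 D Y"
  shows "inj_on Y0 D0"
  using assms unfolding is_restriction_def inj_on_def by (auto simp: subset_iff)

lemma pullback_triple_restriction_iff:
  assumes pt: "pullback_triple J F D Y" and res: "is_restriction D0 Y0 D Y"
  shows "pullback_triple J F D0 Y0 \<longleftrightarrow> closure (Y ` D0) = UNIV"
proof -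
  have left_inverse: "\<forall>f\<in>D. J (Y f) = f" and cont: "continuous_on UNIV J"
    using pt linear_continuous_on by (auto simp: pullback_triple_def)
  have D0_sub: "D0 \<subseteq> D" and Y0_eq: "\<forall>f\<in>D0. Y0 f = Y f"
    using res by (auto simp: is_restriction_def)
  have image_Y0: "Y0 ` D0 = Y ` D0"
    using Y0_eq by (auto simp: image_def)
  have "J ` (Y ` D0) = D0"
    using D0_sub left_inverse by (force simp: image_def)
  then have D0_dense: "closure D0 = UNIV" if "closure (Y ` D0) = UNIV"
    using closure_image_eq_UNIV_if_dense_range[OF cont _ that] pt
    by (simp add: pullback_triple_def)
  have lin: "linear_operator_on D0 Y0" and inj: "inj_on Y0 D0"
    using pt res linear_operator_on_restriction inj_on_restriction
    by (auto simp: pullback_triple_def completion_operator_def)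
  have "\<forall>f\<in>D0. J (Y0 f) = f"
    using D0_sub Y0_eq left_inverse by auto
  then have "pullback_triple J F D0 Y0 \<longleftrightarrow> completion_operator D0 Y0"
    using pt unfolding pullback_triple_def by blast
  also have "\<dots> \<longleftrightarrow> closure (Y ` D0) = UNIV"
    using lin inj D0_dense unfolding completion_operator_def image_Y0 by blast
  finally show ?thesis .
qed

lemma unitary_op_id: "unitary_op (id :: 'a::real_normed_vector \<Rightarrow> 'a)"
  unfolding unitary_op_def by (simp add: linear_id)

lemma pullback_equivalent_same_maps: "pullback_equivalent J F D Y J F D' Y'"
  unfolding pullback_equivalent_def
  by (intro exI[of _ id]) (simp add: unitary_op_id)

theorem mainTheorem5:
  fixes J :: "'x::{real_inner,complete_space} \<Rightarrow> 'h::{real_inner,complete_space}"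
    and F :: "'x \<Rightarrow> 'e::{real_inner,complete_space}"
    and D D0 :: "'h set" and Y Y0 :: "'h \<Rightarrow> 'x"
  assumes "pullback_triple J F D Y"
    and "is_restriction D0 Y0 D Y"
  shows "(pullback_triple J F D0 Y0 \<longleftrightarrow> is_core D0 D Y) \<and>
         (pullback_triple J F D0 Y0 \<longrightarrow> pullback_equivalent J F D Y J F D0 Y0)"
proof -
  have "is_core D0 D Y \<longleftrightarrow> closure (Y ` D0) = UNIV"
  proof (rule is_core_iff_dense_image)
    show "continuous_on UNIV J"
      using assms(1) by (simp add: pullback_triple_def linear_continuous_on)
  qed (use assms in \<open>auto simp: pullback_triple_def completion_operator_def is_restriction_def\<close>)
  then show ?thesis
    using pullback_triple_restriction_iff[OF assms] pullback_equivalent_same_maps by blast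
qed

end
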